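(* Let $\nu$ be a Lévy measure on $\mathbb{R}$ with $\int_{|y|>1}|y|\,\nu(dy)<\infty$ and with a density $\rho$ satisfying $\rho(y)\le M/|y|^{1+\alpha}$ for $|y|\le1$, for some $M>0$ and $\alpha\in[1,2)$. For $\phi$ define $$I\phi(x,t)=\int_{\mathbb{R}}\big[\phi(x+y,t)-\phi(x,t)-y\,\partial_x\phi(x,t)\mathbf{1}_{\{|y|\le1\}}\big]\nu(dy).$$ Let $D=(\ell,r)$ be a bounded open interval, $D^1=(\ell-1,r+1)$, $s>0$, $D_s=D\times(0,s)$, $D^1_s=D^1\times(0,s)$, $E_s=\mathbb{R}\times[0,s]$. (i) Suppose $|\phi(x_1,t_1)-\phi(x_2,t_2)|\le L(|x_1-x_2|+|t_1-t_2|^{1/2})$ for some $L>0$ and all $(x_1,t_1),(x_2,t_2)\in E_s$, and moreover $\phi\in H^{\beta,\beta/2}(\overline{D^1_s})$ for some $\beta\in(\alpha,2)$. Then $I\phi\in H^{\frac{\beta-\alpha}{2},\frac{\beta-\alpha}{4}}(\overline{D_s})$ and $$\|I\phi\|^{(\frac{\beta-\alpha}{2})}_{\overline{D_s}}\le C\big(L+\|\phi\|^{(\beta)}_{\overline{D^1_s}}\big)$$ for a positive constant $C$ depending on $D,\alpha,\beta$. (ii) If $\phi\in H^{\beta,\beta/2}(E_s)$ for some $\beta\in(\alpha,2)$, then $I\phi\in H^{\frac{\beta-\alpha}{2},\frac{\beta-\alpha}{4}}(E_s)$ and $\|I\phi\|^{(\frac{\beta-\alpha}{2})}_{E_s}\le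 C\|\phi\|^{(\beta)}_{E_s}$ for a positive constant $C$ depending on $\alpha$ and $\beta$.
   Context: For a positive non-integer $\beta$ and a closed set $Q\subset\mathbb{R}\times[0,\infty)$, $H^{\beta,\beta/2}(Q)$ is the space of functions $v$ continuous on $Q$ whose classical derivatives $\partial_t^{i}\partial_x^{j}v$ with $2i+j<\beta$ exist and are continuous, with finite norm $\|v\|^{(\beta)}_Q=\sum_{2i+j\le[\beta]}\sup_Q|\partial_t^i\partial_x^jv|+\sum_{2i+j=[\beta]}\sup_{|x-x'|\le\rho_0}\frac{|\partial_t^i\partial_x^jv(x,t)-\partial_t^i\partial_x^jv(x',t)|}{|x-x'|^{\beta-[\beta]}}+\sum_{\beta-2<2i+j<\beta}\sup_{|t-t'|\le\rho_0}\frac{|\partial_t^i\partial_x^jv(x,t)-\partial_t^i\partial_x^jv(x,t')|}{|t-t'|^{(\beta-2i-j)/2}}$ (points in $Q$), for a fixed constant $\rho_0>0$. In particular for $\beta\in(1,2)$ the norm consists of $\sup|v|+\sup|\partial_xv|$, the $x$-Hölder seminorm of order $\beta-1$ of $\partial_xv$, the $t$-Hölder seminorm of order $\beta/2$ of $v$ and the $t$-Hölder seminorm of order $(\beta-1)/2$ of $\partial_xv$. *)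

theory Defs
  imports "HOL-Analysis.Analysis"
begin

definition levy_measure :: "real measure \<Rightarrow> bool" where
  "levy_measure \<nu> \<longleftrightarrow> sets \<nu> = sets borel \<and> emeasure \<nu> {0} = 0 \<and>
     (\<integral>\<^sup>+ y. ennreal (min 1 (y\<^sup>2)) \<partial>\<nu>) < \<infinity>"

definition xslice :: "(real \<times> real) set \<Rightarrow> real \<Rightarrow> real set" where
  "xslice Q t = {z. (z, t) \<in> Q}"

definition dx :: "(real \<times> real) set \<Rightarrow> (real \<times> real \<Rightarrow> real) \<Rightarrow> real \<times> real \<Rightarrow> real" where
  "dx Q v p = vector_derivative (\<lambda>z. v (z, snd p)) (at (fst p) within xslice Q (snd p))"

definition sup_set :: "(real \<times> real) set \<Rightarrow> (real \<times> real \<Rightarrow> real) \<Rightarrow> real set" where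
  "sup_set Q w = {\<bar>w p\<bar> | p. p \<in> Q}"

definition holx_set :: "real \<Rightarrow> (real \<times> real) set \<Rightarrow> (real \<times> real \<Rightarrow> real) \<Rightarrow> real \<Rightarrow> real set" where
  "holx_set \<rho>0 Q w \<gamma> = {\<bar>w p - w q\<bar> / \<bar>fst p - fst q\<bar> powr \<gamma> | p q.
      p \<in> Q \<and> q \<in> Q \<and> snd p = snd q \<and> \<bar>fst p - fst q\<bar> \<le> \<rho>0}"

definition holt_set :: "real \<Rightarrow> (real \<times> real) set \<Rightarrow> (real \<times> real \<Rightarrow> real) \<Rightarrow> real \<Rightarrow> real set" where
  "holt_set \<rho>0 Q w \<gamma> = {\<bar>w p - w q\<bar> / \<bar>snd p - snd q\<bar> powr \<gamma> | p q.
      p \<in> Q \<and> q \<in> Q \<and> fst p = fst q \<and> \<bar>snd p - snd q\<bar> \<le> \<rho>0}"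

text \<open>The parabolic Hoelder space H^{beta,beta/2}(Q), for non-integer beta in (0,2)
  (the only range needed here); for other beta it is left empty.\<close>
definition Hspace :: "real \<Rightarrow> real \<Rightarrow> (real \<times> real) set \<Rightarrow> (real \<times> real \<Rightarrow> real) \<Rightarrow> bool" where
  "Hspace \<rho>0 \<beta> Q v \<longleftrightarrow> continuous_on Q v \<and>
     (if 0 < \<beta> \<and> \<beta> < 1 then
        bdd_above (sup_set Q v) \<and> bdd_above (holx_set \<rho>0 Q v \<beta>) \<and> bdd_above (holt_set \<rho>0 Q v (\<beta>/2))
      else if 1 < \<beta> \<and> \<beta> < 2 then
        (\<forall>p\<in>Q. (\<lambda>z. v (z, snd p)) differentiable (at (fst p) within xslice Q (snd p))) \<and>
        continuous_on Q (dx Q v) \<and>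
        bdd_above (sup_set Q v) \<and> bdd_above (sup_set Q (dx Q v)) \<and>
        bdd_above (holx_set \<rho>0 Q (dx Q v) (\<beta> - 1)) \<and>
        bdd_above (holt_set \<rho>0 Q v (\<beta>/2)) \<and> bdd_above (holt_set \<rho>0 Q (dx Q v) ((\<beta> - 1)/2))
      else False)"

definition Hnorm :: "real \<Rightarrow> real \<Rightarrow> (real \<times> real) set \<Rightarrow> (real \<times> real \<Rightarrow> real) \<Rightarrow> real" where
  "Hnorm \<rho>0 \<beta> Q v =
     (if 0 < \<beta> \<and> \<beta> < 1 then
        Sup (sup_set Q v) + Sup (holx_set \<rho>0 Q v \<beta>) + Sup (holt_set \<rho>0 Q v (\<beta>/2))
      else
        Sup (sup_set Q v) + Sup (sup_set Q (dx Q v)) + Sup (holx_set \<rho>0 Q (dx Q v) (\<beta> - 1))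
        + Sup (holt_set \<rho>0 Q v (\<beta>/2)) + Sup (holt_set \<rho>0 Q (dx Q v) ((\<beta> - 1)/2)))"

definition levy_integrand :: "(real \<times> real \<Rightarrow> real) \<Rightarrow> real \<times> real \<Rightarrow> real \<Rightarrow> real" where
  "levy_integrand \<phi> p y =
     \<phi> (fst p + y, snd p) - \<phi> p - y * deriv (\<lambda>z. \<phi> (z, snd p)) (fst p) * indicator {y. \<bar>y\<bar> \<le> 1} y"

definition Iop :: "real measure \<Rightarrow> (real \<times> real \<Rightarrow> real) \<Rightarrow> real \<times> real \<Rightarrow> real" where
  "Iop \<nu> \<phi> p = (\<integral> y. levy_integrand \<phi> p y \<partial>\<nu>)"

end

theory Submission
  imports Defs
begin

text \<open>Split the integral defining \<open>I\<phi>\<close> at \<open>|y| = 1\<close>. For \<open>|y| > 1\<close> the integrand and its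
  increments are bounded, through the Lipschitz constant, by multiples of \<open>|y|\<close>, which is
  \<open>\<nu>\<close>-integrable there. For \<open>|y| \<le> 1\<close> the integrand is a first-order Taylor remainder in \<open>x\<close>.
  The difference of the remainders at \<open>x\<close> and \<open>x'\<close> is at most \<open>2H |y|^\<beta>\<close> (Hoelder continuity of
  the derivative along each segment) and at most \<open>2H |y| |x - x'|^(\<beta> - 1)\<close> (Hoelder continuity
  across the two segments); interpolating between the two bounds gives \<open>2H |y|^e |x - x'|^\<gamma>\<close>
  with \<open>e = (\<alpha> + \<beta>)/2\<close> and \<open>\<gamma> = (\<beta> - \<alpha>)/2\<close>, and the same works in \<open>t\<close> with \<open>|t - t'|^(1/2)\<close>
  in place of \<open>|x - x'|\<close>. Since \<open>e > \<alpha>\<close> and \<open>\<rho> y \<le> M |y|^(-1 - \<alpha>)\<close>, the weight \<open>|y|^e\<close> is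
  \<open>\<nu>\<close>-integrable near \<open>0\<close>, so integrating the pointwise bounds yields the \<open>(\<gamma>, \<gamma>/2)\<close>-Hoelder
  estimates for \<open>I\<phi>\<close>. In part (ii) the Lipschitz constant is itself bounded by the \<open>H^\<beta>\<close> norm.\<close>

section \<open>Integrability of the Levy weight\<close>

lemma has_integral_abs_powr_unit_interval:
  fixes a :: real
  assumes "a > -1"
  shows "((\<lambda>y. indicator {-1..1} y * \<bar>y\<bar> powr a) has_integral (2 / (a + 1))) UNIV"
proof -
  have "((\<lambda>x. x powr a) has_integral (1 / (a + 1))) {0..1}"
    using has_integral_powr_from_0[OF assms, of 1] by simp
  then have pos: "((\<lambda>x. \<bar>x\<bar> powr a) has_integral (1 / (a + 1))) {0..1}"
    by (rule has_integral_spike_finite[of "{}", rotated 2]) auto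
  have "((\<lambda>x. (\<lambda>x. \<bar>x\<bar> powr a) (-x)) has_integral (1 / (a + 1))) {-1..-0}"
    using has_integral_reflect_real[THEN iffD2, OF pos] by simp
  then have neg: "((\<lambda>x. \<bar>x\<bar> powr a) has_integral (1 / (a + 1))) {-1..0}"
    by simp
  have "((\<lambda>x. \<bar>x\<bar> powr a) has_integral (2 / (a + 1))) {-1..1}"
    using has_integral_combine[OF _ _ neg pos] by simp
  then have "((\<lambda>x. if x \<in> {-1..1} then \<bar>x\<bar> powr a else 0) has_integral (2 / (a + 1))) UNIV"
    by (subst has_integral_restrict_UNIV)
  then show ?thesis
    by (rule has_integral_eq[rotated]) (simp add: indicator_def)
qed

definition levy_weight :: "real \<Rightarrow> real \<Rightarrow> real" where
  "levy_weight e y = (if \<bar>y\<bar> \<le> 1 then \<bar>y\<bar> powr e else \<bar>y\<bar>)"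

lemma levy_weight_nonneg: "0 \<le> levy_weight e y"
  by (simp add: levy_weight_def)

lemma borel_measurable_levy_weight [measurable]: "levy_weight e \<in> borel_measurable borel"
  unfolding levy_weight_def by measurable

lemma nn_integral_abs_powr_near_0_finite:
  fixes \<nu> :: "real measure" and \<rho> :: "real \<Rightarrow> real"
  assumes \<rho>_meas: "\<rho> \<in> borel_measurable borel" and \<rho>_nonneg: "\<And>y. 0 \<le> \<rho> y"
    and \<nu>: "\<nu> = density lborel (\<lambda>y. ennreal (\<rho> y))"
    and near: "\<And>y. y \<noteq> 0 \<Longrightarrow> \<bar>y\<bar> \<le> 1 \<Longrightarrow> \<rho> y \<le> M / \<bar>y\<bar> powr (1 + \<alpha>)"
    and "0 \<le> M" and "\<alpha> < e"
  shows "(\<integral>\<^sup>+ y. ennreal (indicator {-1..1} y * \<bar>y\<bar> powr e) \<partial>\<nu>) < \<infinity>"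
proof -
  define a where "a = e - 1 - \<alpha>"
  have "a > -1"
    using \<open>\<alpha> < e\<close> unfolding a_def by simp
  have "(\<integral>\<^sup>+ y. ennreal (indicator {-1..1} y * \<bar>y\<bar> powr e) \<partial>\<nu>)
      = (\<integral>\<^sup>+ y. ennreal (\<rho> y) * ennreal (indicator {-1..1} y * \<bar>y\<bar> powr e) \<partial>lborel)"
    unfolding \<nu> using \<rho>_meas by (subst nn_integral_density) auto
  also have "\<dots> \<le> (\<integral>\<^sup>+ y. ennreal M * ennreal (indicator {-1..1} y * \<bar>y\<bar> powr a) \<partial>lborel)"
  proof (rule nn_integral_mono)
    fix y :: real
    show "ennreal (\<rho> y) * ennreal (indicator {-1..1} y * \<bar>y\<bar> powr e)
        \<le> ennreal M * ennreal (indicator {-1..1} y * \<bar>y\<bar> powr a)"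
    proof (cases "y \<noteq> 0 \<and> \<bar>y\<bar> \<le> 1")
      case True
      have "\<rho> y * \<bar>y\<bar> powr e \<le> M / \<bar>y\<bar> powr (1 + \<alpha>) * \<bar>y\<bar> powr e"
        using near True by (intro mult_right_mono) auto
      also have "\<dots> = M * \<bar>y\<bar> powr a"
        unfolding a_def using True by (simp add: powr_diff powr_add field_simps)
      finally show ?thesis
        using True \<rho>_nonneg \<open>0 \<le> M\<close>
        by (simp add: indicator_def ennreal_mult[symmetric] ennreal_leI)
    qed (auto simp: indicator_def)
  qed
  also have "\<dots> = ennreal M * (\<integral>\<^sup>+ y. ennreal (indicator {-1..1} y * \<bar>y\<bar> powr a) \<partial>lborel)"
    by (rule nn_integral_cmult) measurable
  also have "(\<integral>\<^sup>+ y. ennreal (indicator {-1..1} y * \<bar>y\<bar> powr a) \<partial>lborel) = ennreal (2 / (a + 1))"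
    by (rule nn_integral_has_integral_lborel[OF _ _ has_integral_abs_powr_unit_interval[OF \<open>a > -1\<close>]])
       (auto simp: indicator_def)
  finally show ?thesis
    using ennreal_mult_less_top[of "ennreal M"] by (simp add: order_le_less_trans)
qed

lemma integrable_levy_weight:
  fixes \<nu> :: "real measure" and \<rho> :: "real \<Rightarrow> real"
  assumes "\<rho> \<in> borel_measurable borel" "\<And>y. 0 \<le> \<rho> y"
    and \<nu>: "\<nu> = density lborel (\<lambda>y. ennreal (\<rho> y))"
    and far: "(\<integral>\<^sup>+ y. ennreal (\<bar>y\<bar> * indicator {y. \<bar>y\<bar> > 1} y) \<partial>\<nu>) < \<infinity>"
    and "\<And>y. y \<noteq> 0 \<Longrightarrow> \<bar>y\<bar> \<le> 1 \<Longrightarrow> \<rho> y \<le> M / \<bar>y\<bar> powr (1 + \<alpha>)"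
    and "0 \<le> M" and "\<alpha> < e"
  shows "integrable \<nu> (levy_weight e)"
proof (rule integrableI_bounded)
  show "levy_weight e \<in> borel_measurable \<nu>"
    unfolding \<nu> by simp
  have "(\<integral>\<^sup>+ y. ennreal (norm (levy_weight e y)) \<partial>\<nu>) =
     (\<integral>\<^sup>+ y. ennreal (indicator {-1..1} y * \<bar>y\<bar> powr e)
             + ennreal (\<bar>y\<bar> * indicator {y. \<bar>y\<bar> > 1} y) \<partial>\<nu>)"
    by (rule nn_integral_cong) (auto simp: levy_weight_def indicator_def)
  also have "\<dots> = (\<integral>\<^sup>+ y. ennreal (indicator {-1..1} y * \<bar>y\<bar> powr e) \<partial>\<nu>)
                 + (\<integral>\<^sup>+ y. ennreal (\<bar>y\<bar> * indicator {y. \<bar>y\<bar> > 1} y) \<partial>\<nu>)"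
    by (rule nn_integral_add) (auto simp: \<nu>)
  also have "\<dots> < \<infinity>"
    using nn_integral_abs_powr_near_0_finite[OF assms(1-3,5-7)] far by simp
  finally show "(\<integral>\<^sup>+ y. ennreal (norm (levy_weight e y)) \<partial>\<nu>) < \<infinity>" .
qed

lemma abs_integral_diff_le:
  fixes f g W :: "real \<Rightarrow> real"
  assumes "integrable \<nu> f" "integrable \<nu> g" "integrable \<nu> W" "\<And>y. \<bar>f y - g y\<bar> \<le> K * W y"
  shows "\<bar>(\<integral>y. f y \<partial>\<nu>) - (\<integral>y. g y \<partial>\<nu>)\<bar> \<le> K * (\<integral>y. W y \<partial>\<nu>)"
proof -
  have "\<bar>(\<integral>y. f y \<partial>\<nu>) - (\<integral>y. g y \<partial>\<nu>)\<bar> = norm (\<integral>y. f y - g y \<partial>\<nu>)"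
    using assms by simp
  also have "\<dots> \<le> (\<integral>y. K * W y \<partial>\<nu>)"
    using assms by (intro Bochner_Integration.integral_norm_bound_integral) auto
  finally show ?thesis
    by simp
qed

section \<open>Taylor remainders\<close>

lemma taylor_remainder_bound:
  fixes k k' :: "real \<Rightarrow> real"
  assumes "\<And>w. w \<in> {min 0 y..max 0 y} \<Longrightarrow> (k has_field_derivative k' w) (at w within {min 0 y..max 0 y})"
    and "\<And>w. w \<in> {min 0 y..max 0 y} \<Longrightarrow> \<bar>k' w - k' 0\<bar> \<le> B"
  shows "\<bar>k y - k 0 - y * k' 0\<bar> \<le> B * \<bar>y\<bar>"
proof -
  have "norm ((k y - y * k' 0) - (k 0 - 0 * k' 0)) \<le> B * norm (y - 0)"
    by (rule field_differentiable_bound[of "{min 0 y..max 0 y}" "\<lambda>w. k w - w * k' 0" "\<lambda>w. k' w - k' 0"])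
       (use assms in \<open>auto intro!: derivative_eq_intros\<close>)
  then show ?thesis
    by (simp add: algebra_simps)
qed

lemma interpolate_remainder_bound:
  fixes g A y h \<beta> e \<gamma> :: real
  assumes "g \<le> A * \<bar>y\<bar> powr \<beta>" and "g \<le> A * \<bar>y\<bar> * h powr (\<beta> - 1)"
    and "\<beta> = e + \<gamma>" "0 \<le> A" "0 \<le> h" "1 \<le> e" "0 \<le> \<gamma>"
  shows "g \<le> A * \<bar>y\<bar> powr e * h powr \<gamma>"
proof (cases "\<bar>y\<bar> \<le> h")
  case True
  have "\<bar>y\<bar> powr \<beta> = \<bar>y\<bar> powr e * \<bar>y\<bar> powr \<gamma>"
    using assms by (simp add: powr_add)
  also have "\<dots> \<le> \<bar>y\<bar> powr e * h powr \<gamma>"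
    using True assms by (intro mult_left_mono powr_mono2) auto
  finally show ?thesis
    using assms by (smt (verit) mult_left_mono mult.assoc)
next
  case False
  have "\<bar>y\<bar> * h powr (\<beta> - 1) = \<bar>y\<bar> * h powr (e - 1) * h powr \<gamma>"
    using assms by (simp add: powr_add[symmetric] algebra_simps)
  also have "\<dots> \<le> \<bar>y\<bar> * \<bar>y\<bar> powr (e - 1) * h powr \<gamma>"
    using False assms by (intro mult_right_mono mult_left_mono powr_mono2) auto
  also have "\<bar>y\<bar> * \<bar>y\<bar> powr (e - 1) = \<bar>y\<bar> powr e"
    using False assms by (simp add: powr_diff)
  finally show ?thesis
    using assms by (smt (verit) mult_left_mono mult.assoc)
qed

lemma abs_le_abs_if_between_0: "(w::real) \<in> {min 0 y..max 0 y} \<Longrightarrow> \<bar>w\<bar> \<le> \<bar>y\<bar>"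
  by (auto simp: min_def max_def split: if_splits)

lemma taylor_remainder_interpolation_bound:
  fixes k k' :: "real \<Rightarrow> real"
  assumes deriv: "\<And>w. w \<in> {min 0 y..max 0 y} \<Longrightarrow> (k has_field_derivative k' w) (at w within {min 0 y..max 0 y})"
    and near: "\<And>w. w \<in> {min 0 y..max 0 y} \<Longrightarrow> \<bar>k' w - k' 0\<bar> \<le> A * \<bar>w\<bar> powr (\<beta> - 1)"
    and uniform: "\<And>w. w \<in> {min 0 y..max 0 y} \<Longrightarrow> \<bar>k' w - k' 0\<bar> \<le> A * h powr (\<beta> - 1)"
    and "\<beta> = e + \<gamma>" "0 \<le> A" "0 \<le> h" "1 \<le> e" "0 \<le> \<gamma>"
  shows "\<bar>k y - k 0 - y * k' 0\<bar> \<le> A * \<bar>y\<bar> powr e * h powr \<gamma>"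
proof (rule interpolate_remainder_bound)
  have "\<bar>k' w - k' 0\<bar> \<le> A * \<bar>y\<bar> powr (\<beta> - 1)" if "w \<in> {min 0 y..max 0 y}" for w
  proof -
    have "\<bar>w\<bar> powr (\<beta> - 1) \<le> \<bar>y\<bar> powr (\<beta> - 1)"
      using abs_le_abs_if_between_0[OF that] assms by (intro powr_mono2) auto
    then show ?thesis
      using order_trans[OF near[OF that] mult_left_mono[OF _ \<open>0 \<le> A\<close>]] by blast
  qed
  then have "\<bar>k y - k 0 - y * k' 0\<bar> \<le> A * \<bar>y\<bar> powr (\<beta> - 1) * \<bar>y\<bar>"
    using taylor_remainder_bound[OF deriv] by blast
  also have "\<dots> = A * \<bar>y\<bar> powr \<beta>"
    by (cases "y = 0") (simp_all add: powr_diff)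
  finally show "\<bar>k y - k 0 - y * k' 0\<bar> \<le> A * \<bar>y\<bar> powr \<beta>" .
  show "\<bar>k y - k 0 - y * k' 0\<bar> \<le> A * \<bar>y\<bar> * h powr (\<beta> - 1)"
    using taylor_remainder_bound[OF deriv uniform] by (simp add: algebra_simps)
qed (use assms in auto)

lemma zero_in_holx_set:
  assumes "p \<in> Q" "0 \<le> \<rho>0"
  shows "0 \<in> holx_set \<rho>0 Q w \<gamma>"
  unfolding holx_set_def using assms by (intro CollectI exI[of _ p]) simp

lemma zero_in_holt_set:
  assumes "p \<in> Q" "0 \<le> \<rho>0"
  shows "0 \<in> holt_set \<rho>0 Q w \<gamma>"
  unfolding holt_set_def using assms by (intro CollectI exI[of _ p]) simp

lemma abs_le_Sup_sup_set: "p \<in> Q \<Longrightarrow> bdd_above (sup_set Q w) \<Longrightarrow> \<bar>w p\<bar> \<le> Sup (sup_set Q w)"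
  unfolding sup_set_def by (rule cSup_upper) blast+

lemma Sup_sup_set_nonneg: "p \<in> Q \<Longrightarrow> bdd_above (sup_set Q w) \<Longrightarrow> 0 \<le> Sup (sup_set Q w)"
  using abs_le_Sup_sup_set[of p Q w] by linarith

lemma Sup_holx_set_nonneg:
  "p \<in> Q \<Longrightarrow> 0 \<le> \<rho>0 \<Longrightarrow> bdd_above (holx_set \<rho>0 Q w \<gamma>) \<Longrightarrow> 0 \<le> Sup (holx_set \<rho>0 Q w \<gamma>)"
  by (rule cSup_upper[OF zero_in_holx_set])

lemma Sup_holt_set_nonneg:
  "p \<in> Q \<Longrightarrow> 0 \<le> \<rho>0 \<Longrightarrow> bdd_above (holt_set \<rho>0 Q w \<gamma>) \<Longrightarrow> 0 \<le> Sup (holt_set \<rho>0 Q w \<gamma>)"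
  by (rule cSup_upper[OF zero_in_holt_set])

lemma holx_increment_le_Sup:
  assumes "bdd_above (holx_set \<rho>0 Q w \<gamma>)" "(a, t) \<in> Q" "(b, t) \<in> Q" "\<bar>a - b\<bar> \<le> \<rho>0"
  shows "\<bar>w (a, t) - w (b, t)\<bar> \<le> Sup (holx_set \<rho>0 Q w \<gamma>) * \<bar>a - b\<bar> powr \<gamma>"
proof (cases "a = b")
  case False
  have "\<bar>w (a, t) - w (b, t)\<bar> / \<bar>a - b\<bar> powr \<gamma> \<in> holx_set \<rho>0 Q w \<gamma>"
    unfolding holx_set_def using assms by force
  then have "\<bar>w (a, t) - w (b, t)\<bar> / \<bar>a - b\<bar> powr \<gamma> \<le> Sup (holx_set \<rho>0 Q w \<gamma>)"
    using assms(1) by (rule cSup_upper)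
  then show ?thesis
    using False by (simp add: divide_le_eq)
qed simp

lemma holt_increment_le_Sup:
  assumes "bdd_above (holt_set \<rho>0 Q w \<gamma>)" "(x, a) \<in> Q" "(x, b) \<in> Q" "\<bar>a - b\<bar> \<le> \<rho>0"
  shows "\<bar>w (x, a) - w (x, b)\<bar> \<le> Sup (holt_set \<rho>0 Q w \<gamma>) * \<bar>a - b\<bar> powr \<gamma>"
proof (cases "a = b")
  case False
  have "\<bar>w (x, a) - w (x, b)\<bar> / \<bar>a - b\<bar> powr \<gamma> \<in> holt_set \<rho>0 Q w \<gamma>"
    unfolding holt_set_def using assms by force
  then have "\<bar>w (x, a) - w (x, b)\<bar> / \<bar>a - b\<bar> powr \<gamma> \<le> Sup (holt_set \<rho>0 Q w \<gamma>)"
    using assms(1) by (rule cSup_upper)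
  then show ?thesis
    using False by (simp add: divide_le_eq)
qed simp

text \<open>Increments longer than \<open>\<rho>0\<close> are invisible to the seminorms; they are controlled by
  the sup norm instead.\<close>

lemma le_hoelder_beyond_radius:
  fixes a d :: real
  assumes "d \<le> \<rho>0 \<Longrightarrow> a \<le> K * d powr \<gamma>" and "a \<le> 2 * S"
    and "0 \<le> K" "0 \<le> S" "0 < \<rho>0" "0 < \<gamma>" "0 \<le> d"
  shows "a \<le> (K + 2 * S / \<rho>0 powr \<gamma>) * d powr \<gamma>"
proof (cases "d \<le> \<rho>0")
  case True
  moreover have "0 \<le> 2 * S / \<rho>0 powr \<gamma> * d powr \<gamma>"
    using assms by simp
  ultimately show ?thesis
    using assms(1) unfolding distrib_right by linarith
next
  case False
  then have "\<rho>0 powr \<gamma> \<le> d powr \<gamma>"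
    using assms by (intro powr_mono2) auto
  then have "2 * S \<le> 2 * S / \<rho>0 powr \<gamma> * d powr \<gamma>"
    using assms by (simp add: field_simps mult_left_mono)
  moreover have "0 \<le> K * d powr \<gamma>"
    using assms by simp
  ultimately show ?thesis
    using assms(2) unfolding distrib_right by linarith
qed

lemma holx_increment_bound:
  assumes "bdd_above (holx_set \<rho>0 Q w \<gamma>)" "bdd_above (sup_set Q w)"
    and "(a, t) \<in> Q" "(b, t) \<in> Q" "0 < \<rho>0" "0 < \<gamma>"
  shows "\<bar>w (a, t) - w (b, t)\<bar>
    \<le> (Sup (holx_set \<rho>0 Q w \<gamma>) + 2 * Sup (sup_set Q w) / \<rho>0 powr \<gamma>) * \<bar>a - b\<bar> powr \<gamma>"
proof (rule le_hoelder_beyond_radius)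
  show "\<bar>w (a, t) - w (b, t)\<bar> \<le> 2 * Sup (sup_set Q w)"
    using abs_le_Sup_sup_set[OF assms(3,2)] abs_le_Sup_sup_set[OF assms(4,2)] by linarith
  show "\<bar>a - b\<bar> \<le> \<rho>0 \<Longrightarrow> \<bar>w (a, t) - w (b, t)\<bar> \<le> Sup (holx_set \<rho>0 Q w \<gamma>) * \<bar>a - b\<bar> powr \<gamma>"
    by (rule holx_increment_le_Sup[OF assms(1,3,4)])
  show "0 \<le> Sup (holx_set \<rho>0 Q w \<gamma>)"
    using Sup_holx_set_nonneg[OF assms(3)] assms(1,5) by simp
  show "0 \<le> Sup (sup_set Q w)"
    by (rule Sup_sup_set_nonneg[OF assms(3,2)])
qed (use assms in auto)

lemma holt_increment_bound:
  assumes "bdd_above (holt_set \<rho>0 Q w \<gamma>)" "bdd_above (sup_set Q w)"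
    and "(x, a) \<in> Q" "(x, b) \<in> Q" "0 < \<rho>0" "0 < \<gamma>"
  shows "\<bar>w (x, a) - w (x, b)\<bar>
    \<le> (Sup (holt_set \<rho>0 Q w \<gamma>) + 2 * Sup (sup_set Q w) / \<rho>0 powr \<gamma>) * \<bar>a - b\<bar> powr \<gamma>"
proof (rule le_hoelder_beyond_radius)
  show "\<bar>w (x, a) - w (x, b)\<bar> \<le> 2 * Sup (sup_set Q w)"
    using abs_le_Sup_sup_set[OF assms(3,2)] abs_le_Sup_sup_set[OF assms(4,2)] by linarith
  show "\<bar>a - b\<bar> \<le> \<rho>0 \<Longrightarrow> \<bar>w (x, a) - w (x, b)\<bar> \<le> Sup (holt_set \<rho>0 Q w \<gamma>) * \<bar>a - b\<bar> powr \<gamma>"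
    by (rule holt_increment_le_Sup[OF assms(1,3,4)])
  show "0 \<le> Sup (holt_set \<rho>0 Q w \<gamma>)"
    using Sup_holt_set_nonneg[OF assms(3)] assms(1,5) by simp
  show "0 \<le> Sup (sup_set Q w)"
    by (rule Sup_sup_set_nonneg[OF assms(3,2)])
qed (use assms in auto)

section \<open>Parabolic Hoelder spaces of order between 1 and 2\<close>

lemma Hspace_1_2D:
  assumes "Hspace \<rho>0 \<beta> Q v" "1 < \<beta>" "\<beta> < 2"
  shows "\<And>p. p \<in> Q \<Longrightarrow> (\<lambda>z. v (z, snd p)) differentiable (at (fst p) within xslice Q (snd p))"
    and "bdd_above (sup_set Q v)" and "bdd_above (sup_set Q (dx Q v))"
    and "bdd_above (holx_set \<rho>0 Q (dx Q v) (\<beta> - 1))"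
    and "bdd_above (holt_set \<rho>0 Q v (\<beta>/2))"
    and "bdd_above (holt_set \<rho>0 Q (dx Q v) ((\<beta> - 1)/2))"
  using assms by (simp_all add: Hspace_def)

lemma Hnorm_1_2_bounds:
  assumes "Hspace \<rho>0 \<beta> Q v" "1 < \<beta>" "\<beta> < 2" "p \<in> Q" "0 \<le> \<rho>0"
  shows "0 \<le> Hnorm \<rho>0 \<beta> Q v"
    and "Sup (sup_set Q v) \<le> Hnorm \<rho>0 \<beta> Q v"
    and "Sup (sup_set Q (dx Q v)) \<le> Hnorm \<rho>0 \<beta> Q v"
    and "Sup (holx_set \<rho>0 Q (dx Q v) (\<beta> - 1)) \<le> Hnorm \<rho>0 \<beta> Q v"
    and "Sup (holt_set \<rho>0 Q v (\<beta>/2)) \<le> Hnorm \<rho>0 \<beta> Q v"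
    and "Sup (holt_set \<rho>0 Q (dx Q v) ((\<beta> - 1)/2)) \<le> Hnorm \<rho>0 \<beta> Q v"
proof -
  note H = Hspace_1_2D[OF assms(1-3)]
  have "0 \<le> Sup (sup_set Q v)" "0 \<le> Sup (sup_set Q (dx Q v))"
    "0 \<le> Sup (holx_set \<rho>0 Q (dx Q v) (\<beta> - 1))" "0 \<le> Sup (holt_set \<rho>0 Q v (\<beta>/2))"
    "0 \<le> Sup (holt_set \<rho>0 Q (dx Q v) ((\<beta> - 1)/2))"
    by (rule Sup_sup_set_nonneg[OF assms(4) H(2)] Sup_sup_set_nonneg[OF assms(4) H(3)]
        Sup_holx_set_nonneg[OF assms(4,5) H(4)] Sup_holt_set_nonneg[OF assms(4,5) H(5)]
        Sup_holt_set_nonneg[OF assms(4,5) H(6)])+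
  moreover have "Hnorm \<rho>0 \<beta> Q v = Sup (sup_set Q v) + Sup (sup_set Q (dx Q v))
      + Sup (holx_set \<rho>0 Q (dx Q v) (\<beta> - 1)) + Sup (holt_set \<rho>0 Q v (\<beta>/2))
      + Sup (holt_set \<rho>0 Q (dx Q v) ((\<beta> - 1)/2))"
    using assms(2) by (simp add: Hnorm_def)
  ultimately show "0 \<le> Hnorm \<rho>0 \<beta> Q v"
    and "Sup (sup_set Q v) \<le> Hnorm \<rho>0 \<beta> Q v"
    and "Sup (sup_set Q (dx Q v)) \<le> Hnorm \<rho>0 \<beta> Q v"
    and "Sup (holx_set \<rho>0 Q (dx Q v) (\<beta> - 1)) \<le> Hnorm \<rho>0 \<beta> Q v"
    and "Sup (holt_set \<rho>0 Q v (\<beta>/2)) \<le> Hnorm \<rho>0 \<beta> Q v"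
    and "Sup (holt_set \<rho>0 Q (dx Q v) ((\<beta> - 1)/2)) \<le> Hnorm \<rho>0 \<beta> Q v"
    by linarith+
qed

lemma Hspace_abs_le_Hnorm:
  assumes "Hspace \<rho>0 \<beta> Q v" "1 < \<beta>" "\<beta> < 2" "p \<in> Q" "0 \<le> \<rho>0"
  shows "\<bar>v p\<bar> \<le> Hnorm \<rho>0 \<beta> Q v" and "\<bar>dx Q v p\<bar> \<le> Hnorm \<rho>0 \<beta> Q v"
  using abs_le_Sup_sup_set[OF assms(4) Hspace_1_2D(2)[OF assms(1-3)]]
    abs_le_Sup_sup_set[OF assms(4) Hspace_1_2D(3)[OF assms(1-3)]]
    Hnorm_1_2_bounds(2,3)[OF assms] by linarith+

lemma hoelder_const_le:
  fixes K S N r :: real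
  assumes "K \<le> N" "S \<le> N" "0 < r"
  shows "K + 2 * S / r \<le> (1 + 2 / r) * N"
proof -
  have "2 * S / r \<le> 2 * N / r"
    using assms by (intro divide_right_mono) auto
  then show ?thesis
    using assms(1) by (simp add: distrib_right)
qed

lemma Hspace_has_x_derivative:
  assumes "Hspace \<rho>0 \<beta> (I \<times> {0..s}) v" "1 < \<beta>" "\<beta> < 2" "z \<in> I" "t \<in> {0..s}"
  shows "((\<lambda>z. v (z, t)) has_field_derivative dx (I \<times> {0..s}) v (z, t)) (at z within I)"
proof -
  have slice: "xslice (I \<times> {0..s}) t = I"
    using assms(5) by (auto simp: xslice_def)
  have "(\<lambda>z. v (z, t)) differentiable (at z within I)"
    using Hspace_1_2D(1)[OF assms(1-3), of "(z, t)"] assms(4,5) slice by simp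
  then have "((\<lambda>z. v (z, t)) has_vector_derivative vector_derivative (\<lambda>z. v (z, t)) (at z within I))
      (at z within I)"
    by (rule vector_derivative_works[THEN iffD1])
  then show ?thesis
    by (simp add: dx_def slice has_real_derivative_iff_has_vector_derivative)
qed

lemma Hspace_dx_holx_bound:
  assumes "Hspace \<rho>0 \<beta> Q v" "1 < \<beta>" "\<beta> < 2" "0 < \<rho>0" "(a, t) \<in> Q" "(b, t) \<in> Q"
  shows "\<bar>dx Q v (a, t) - dx Q v (b, t)\<bar>
    \<le> (1 + 2 / \<rho>0 powr (\<beta> - 1)) * Hnorm \<rho>0 \<beta> Q v * \<bar>a - b\<bar> powr (\<beta> - 1)"
proof -
  note H = Hspace_1_2D[OF assms(1-3)] and N = Hnorm_1_2_bounds[OF assms(1-3,5) less_imp_le[OF assms(4)]]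
  have "\<bar>dx Q v (a, t) - dx Q v (b, t)\<bar>
      \<le> (Sup (holx_set \<rho>0 Q (dx Q v) (\<beta> - 1)) + 2 * Sup (sup_set Q (dx Q v)) / \<rho>0 powr (\<beta> - 1))
         * \<bar>a - b\<bar> powr (\<beta> - 1)"
    using H assms by (intro holx_increment_bound) auto
  also have "\<dots> \<le> (1 + 2 / \<rho>0 powr (\<beta> - 1)) * Hnorm \<rho>0 \<beta> Q v * \<bar>a - b\<bar> powr (\<beta> - 1)"
    using N assms(4) by (intro mult_right_mono hoelder_const_le) auto
  finally show ?thesis .
qed

lemma Hspace_dx_holt_bound:
  assumes "Hspace \<rho>0 \<beta> Q v" "1 < \<beta>" "\<beta> < 2" "0 < \<rho>0" "(x, a) \<in> Q" "(x, b) \<in> Q"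
  shows "\<bar>dx Q v (x, a) - dx Q v (x, b)\<bar>
    \<le> (1 + 2 / \<rho>0 powr ((\<beta> - 1)/2)) * Hnorm \<rho>0 \<beta> Q v * \<bar>a - b\<bar> powr ((\<beta> - 1)/2)"
proof -
  note H = Hspace_1_2D[OF assms(1-3)] and N = Hnorm_1_2_bounds[OF assms(1-3,5) less_imp_le[OF assms(4)]]
  have "\<bar>dx Q v (x, a) - dx Q v (x, b)\<bar>
      \<le> (Sup (holt_set \<rho>0 Q (dx Q v) ((\<beta> - 1)/2))
          + 2 * Sup (sup_set Q (dx Q v)) / \<rho>0 powr ((\<beta> - 1)/2)) * \<bar>a - b\<bar> powr ((\<beta> - 1)/2)"
    using H assms by (intro holt_increment_bound) auto
  also have "\<dots> \<le> (1 + 2 / \<rho>0 powr ((\<beta> - 1)/2)) * Hnorm \<rho>0 \<beta> Q v * \<bar>a - b\<bar> powr ((\<beta> - 1)/2)"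
    using N assms(4) by (intro mult_right_mono hoelder_const_le) auto
  finally show ?thesis .
qed

lemma Hspace_holt_bound:
  assumes "Hspace \<rho>0 \<beta> Q v" "1 < \<beta>" "\<beta> < 2" "0 < \<rho>0" "(x, a) \<in> Q" "(x, b) \<in> Q"
  shows "\<bar>v (x, a) - v (x, b)\<bar> \<le> (1 + 2 / \<rho>0 powr (\<beta>/2)) * Hnorm \<rho>0 \<beta> Q v * \<bar>a - b\<bar> powr (\<beta>/2)"
proof -
  note H = Hspace_1_2D[OF assms(1-3)] and N = Hnorm_1_2_bounds[OF assms(1-3,5) less_imp_le[OF assms(4)]]
  have "\<bar>v (x, a) - v (x, b)\<bar>
      \<le> (Sup (holt_set \<rho>0 Q v (\<beta>/2)) + 2 * Sup (sup_set Q v) / \<rho>0 powr (\<beta>/2)) * \<bar>a - b\<bar> powr (\<beta>/2)"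
    using H assms by (intro holt_increment_bound) auto
  also have "\<dots> \<le> (1 + 2 / \<rho>0 powr (\<beta>/2)) * Hnorm \<rho>0 \<beta> Q v * \<bar>a - b\<bar> powr (\<beta>/2)"
    using N assms(4) by (intro mult_right_mono hoelder_const_le) auto
  finally show ?thesis .
qed

lemma Hspace_parabolic_lipschitz:
  assumes "Hspace \<rho>0 \<beta> (UNIV \<times> {0..s}) v" "1 < \<beta>" "\<beta> < 2" "0 < \<rho>0"
    and "t1 \<in> {0..s}" "t2 \<in> {0..s}"
  shows "\<bar>v (x1, t1) - v (x2, t2)\<bar>
    \<le> (2 + 2 / \<rho>0 powr (\<beta>/2)) * Hnorm \<rho>0 \<beta> (UNIV \<times> {0..s}) v * (\<bar>x1 - x2\<bar> + \<bar>t1 - t2\<bar> powr (1/2))"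
proof -
  define Q where "Q = (UNIV :: real set) \<times> {0..s}"
  define N where "N = Hnorm \<rho>0 \<beta> Q v"
  define c where "c = 2 + 2 / \<rho>0 powr (\<beta>/2)"
  note N_bounds = Hspace_abs_le_Hnorm[OF assms(1-3)[folded Q_def] _ less_imp_le[OF assms(4)], folded N_def]
  have "0 \<le> N"
    using Hnorm_1_2_bounds(1)[OF assms(1-3)[folded Q_def], of "(0, t1)"] assms(4,5) by (simp add: N_def Q_def)
  have x_bound: "norm (v (x1, t1) - v (x2, t1)) \<le> N * norm (x1 - x2)"
  proof (rule field_differentiable_bound[of UNIV])
    show "((\<lambda>z. v (z, t1)) has_field_derivative dx Q v (z, t1)) (at z within UNIV)" for z
      using Hspace_has_x_derivative[OF assms(1-3)] assms(5) unfolding Q_def by blast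
    show "norm (dx Q v (z, t1)) \<le> N" for z
      using N_bounds(2)[of "(z, t1)"] assms(5) unfolding Q_def by simp
  qed auto
  have "N \<le> c * N"
    using mult_right_mono[of 1 c N] \<open>0 \<le> N\<close> assms(4) unfolding c_def by simp
  then have x_part: "\<bar>v (x1, t1) - v (x2, t1)\<bar> \<le> c * N * \<bar>x1 - x2\<bar>"
    using x_bound mult_right_mono[of N "c * N" "\<bar>x1 - x2\<bar>"] by simp
  have t_part: "\<bar>v (x2, t1) - v (x2, t2)\<bar> \<le> c * N * \<bar>t1 - t2\<bar> powr (1/2)"
  proof (cases "\<bar>t1 - t2\<bar> \<le> 1")
    case True
    have "\<bar>v (x2, t1) - v (x2, t2)\<bar> \<le> (1 + 2 / \<rho>0 powr (\<beta>/2)) * N * \<bar>t1 - t2\<bar> powr (\<beta>/2)"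
      using Hspace_holt_bound[OF assms(1-4)] assms(5,6) unfolding N_def Q_def by simp
    also have "\<dots> \<le> c * N * \<bar>t1 - t2\<bar> powr (1/2)"
      using True assms(2,4) \<open>0 \<le> N\<close> unfolding c_def by (intro mult_mono powr_mono') auto
    finally show ?thesis .
  next
    case False
    have "\<bar>v (x2, t1) - v (x2, t2)\<bar> \<le> 2 * N * 1"
      using N_bounds(1)[of "(x2, t1)"] N_bounds(1)[of "(x2, t2)"] assms(5,6) unfolding Q_def by simp
    also have "\<dots> \<le> c * N * \<bar>t1 - t2\<bar> powr (1/2)"
      using False assms(4) \<open>0 \<le> N\<close> unfolding c_def
      by (intro mult_mono ge_one_powr_ge_zero) auto
    finally show ?thesis .
  qed
  have "\<bar>v (x1, t1) - v (x2, t2)\<bar> \<le> \<bar>v (x1, t1) - v (x2, t1)\<bar> + \<bar>v (x2, t1) - v (x2, t2)\<bar>"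
    by linarith
  also have "\<dots> \<le> c * N * (\<bar>x1 - x2\<bar> + \<bar>t1 - t2\<bar> powr (1/2))"
    using x_part t_part by (simp add: distrib_left)
  finally show ?thesis
    unfolding c_def N_def Q_def .
qed

section \<open>Parabolic Hoelder spaces of order below 1\<close>

lemma continuous_on_if_local_hoelder:
  fixes f :: "real \<times> real \<Rightarrow> real"
  assumes bound: "\<And>p q. p \<in> S \<Longrightarrow> q \<in> S \<Longrightarrow> dist p q \<le> 1 \<Longrightarrow>
       \<bar>f p - f q\<bar> \<le> K * (\<bar>fst p - fst q\<bar> powr a + \<bar>snd p - snd q\<bar> powr b)"
    and "0 < a" "0 < b"
  shows "continuous_on S f"
  unfolding continuous_on_def
proof
  fix p assume "p \<in> S"
  have "((\<lambda>q. fst q - fst p) \<longlongrightarrow> 0) (at p within S)" "((\<lambda>q. snd q - snd p) \<longlongrightarrow> 0) (at p within S)"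
    by (intro LIM_zero tendsto_fst tendsto_snd tendsto_ident_at)+
  then have "((\<lambda>q. \<bar>fst q - fst p\<bar> powr a) \<longlongrightarrow> 0) (at p within S)"
    "((\<lambda>q. \<bar>snd q - snd p\<bar> powr b) \<longlongrightarrow> 0) (at p within S)"
    using assms(2,3) by (auto intro!: tendsto_zero_powrI tendsto_rabs_zero)
  then have "((\<lambda>q. K * (\<bar>fst q - fst p\<bar> powr a + \<bar>snd q - snd p\<bar> powr b)) \<longlongrightarrow> 0) (at p within S)"
    by (intro tendsto_mult_right_zero tendsto_add_zero)
  moreover have "\<forall>\<^sub>F q in at p within S. norm (f q - f p) \<le> K * (\<bar>fst q - fst p\<bar> powr a + \<bar>snd q - snd p\<bar> powr b)"
    unfolding eventually_at using bound \<open>p \<in> S\<close> by (intro exI[of _ 1]) auto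
  ultimately have "((\<lambda>q. f q - f p) \<longlongrightarrow> 0) (at p within S)"
    by (rule Lim_null_comparison[rotated])
  then show "(f \<longlongrightarrow> f p) (at p within S)"
    by (simp add: LIM_zero_iff)
qed

lemma quotient_le_of_local_bound:
  fixes a d :: real
  assumes "0 \<le> a" "0 \<le> d" "d \<le> 1 \<Longrightarrow> a \<le> K * d powr \<gamma>" "a \<le> B" "0 \<le> K" "0 \<le> B" "0 < \<gamma>"
  shows "a / d powr \<gamma> \<le> K + B"
proof (cases "d \<le> 1")
  case True
  then have "a / d powr \<gamma> \<le> K"
    using assms by (cases "d = 0") (simp_all add: divide_le_eq)
  then show ?thesis
    using assms by simp
next
  case False
  then have "1 \<le> d powr \<gamma>"
    using assms by (simp add: ge_one_powr_ge_zero)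
  then have "a / d powr \<gamma> \<le> a"
    using assms by (simp add: divide_le_eq mult_le_cancel_left1)
  then show ?thesis
    using assms by simp
qed

lemma holx_set_le:
  assumes "z \<in> holx_set \<rho>0 Q g \<gamma>" and sup: "\<And>p. p \<in> Q \<Longrightarrow> \<bar>g p\<bar> \<le> S"
    and local: "\<And>x x' t. (x, t) \<in> Q \<Longrightarrow> (x', t) \<in> Q \<Longrightarrow> \<bar>x - x'\<bar> \<le> 1 \<Longrightarrow>
      \<bar>g (x, t) - g (x', t)\<bar> \<le> K * \<bar>x - x'\<bar> powr \<gamma>"
    and "0 \<le> K" "0 < \<gamma>"
  shows "z \<le> K + 2 * S"
proof -
  obtain p q where "z = \<bar>g p - g q\<bar> / \<bar>fst p - fst q\<bar> powr \<gamma>" "p \<in> Q" "q \<in> Q" "snd p = snd q"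
    using assms(1) unfolding holx_set_def by blast
  then obtain x x' t where z: "z = \<bar>g (x, t) - g (x', t)\<bar> / \<bar>x - x'\<bar> powr \<gamma>" "(x, t) \<in> Q" "(x', t) \<in> Q"
    by (cases p, cases q) auto
  have "\<bar>g (x, t) - g (x', t)\<bar> \<le> 2 * S" "0 \<le> S"
    using sup[OF z(2)] sup[OF z(3)] by linarith+
  then show ?thesis
    unfolding z using local[OF z(2,3)] assms(4,5) by (intro quotient_le_of_local_bound) simp_all
qed

lemma holt_set_le:
  assumes "z \<in> holt_set \<rho>0 Q g \<gamma>" and sup: "\<And>p. p \<in> Q \<Longrightarrow> \<bar>g p\<bar> \<le> S"
    and local: "\<And>x t t'. (x, t) \<in> Q \<Longrightarrow> (x, t') \<in> Q \<Longrightarrow> \<bar>t - t'\<bar> \<le> 1 \<Longrightarrow>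
      \<bar>g (x, t) - g (x, t')\<bar> \<le> K * \<bar>t - t'\<bar> powr \<gamma>"
    and "0 \<le> K" "0 < \<gamma>"
  shows "z \<le> K + 2 * S"
proof -
  obtain p q where "z = \<bar>g p - g q\<bar> / \<bar>snd p - snd q\<bar> powr \<gamma>" "p \<in> Q" "q \<in> Q" "fst p = fst q"
    using assms(1) unfolding holt_set_def by blast
  then obtain x t t' where z: "z = \<bar>g (x, t) - g (x, t')\<bar> / \<bar>t - t'\<bar> powr \<gamma>" "(x, t) \<in> Q" "(x, t') \<in> Q"
    by (cases p, cases q) auto
  have "\<bar>g (x, t) - g (x, t')\<bar> \<le> 2 * S" "0 \<le> S"
    using sup[OF z(2)] sup[OF z(3)] by linarith+
  then show ?thesis
    unfolding z using local[OF z(2,3)] assms(4,5) by (intro quotient_le_of_local_bound) simp_all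
qed

lemma Hspace_of_hoelder_bounds:
  fixes g :: "real \<times> real \<Rightarrow> real" and A B :: "real set"
  assumes \<gamma>: "0 < \<gamma>" "\<gamma> < 1" and "0 \<le> \<rho>0" and "x0 \<in> A" "t0 \<in> B"
    and sup: "\<And>x t. x \<in> A \<Longrightarrow> t \<in> B \<Longrightarrow> \<bar>g (x, t)\<bar> \<le> S"
    and hx: "\<And>x x' t. x \<in> A \<Longrightarrow> x' \<in> A \<Longrightarrow> t \<in> B \<Longrightarrow> \<bar>x - x'\<bar> \<le> 1 \<Longrightarrow>
      \<bar>g (x, t) - g (x', t)\<bar> \<le> Kx * \<bar>x - x'\<bar> powr \<gamma>"
    and ht: "\<And>x t t'. x \<in> A \<Longrightarrow> t \<in> B \<Longrightarrow> t' \<in> B \<Longrightarrow> \<bar>t - t'\<bar> \<le> 1 \<Longrightarrow>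
      \<bar>g (x, t) - g (x, t')\<bar> \<le> Kt * \<bar>t - t'\<bar> powr (\<gamma>/2)"
    and "0 \<le> Kx" "0 \<le> Kt"
  shows "Hspace \<rho>0 \<gamma> (A \<times> B) g \<and> Hnorm \<rho>0 \<gamma> (A \<times> B) g \<le> 5 * S + Kx + Kt"
proof -
  have sup_le: "z \<le> S" if "z \<in> sup_set (A \<times> B) g" for z
    using that sup unfolding sup_set_def by blast
  have holx_le: "z \<le> Kx + 2 * S" if "z \<in> holx_set \<rho>0 (A \<times> B) g \<gamma>" for z
    using that sup hx assms by (intro holx_set_le[of z \<rho>0 "A \<times> B" g \<gamma>]) auto
  have holt_le: "z \<le> Kt + 2 * S" if "z \<in> holt_set \<rho>0 (A \<times> B) g (\<gamma>/2)" for z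
    using that sup ht assms by (intro holt_set_le[of z \<rho>0 "A \<times> B" g "\<gamma>/2"]) auto
  have "continuous_on (A \<times> B) g"
  proof (rule continuous_on_if_local_hoelder)
    fix p q assume "p \<in> A \<times> B" "q \<in> A \<times> B" "dist p q \<le> 1"
    then obtain x t x' t' where pq: "p = (x, t)" "q = (x', t')" "x \<in> A" "x' \<in> A" "t \<in> B" "t' \<in> B"
      by auto
    have "\<bar>x - x'\<bar> \<le> 1" "\<bar>t - t'\<bar> \<le> 1"
      using dist_fst_le[of p q] dist_snd_le[of p q] \<open>dist p q \<le> 1\<close> pq by (auto simp: dist_real_def)
    then have "\<bar>g p - g q\<bar> \<le> Kx * \<bar>x - x'\<bar> powr \<gamma> + Kt * \<bar>t - t'\<bar> powr (\<gamma>/2)"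
      using hx[of x x' t] ht[of x' t t'] pq by fastforce
    also have "\<dots> \<le> (Kx + Kt) * (\<bar>x - x'\<bar> powr \<gamma> + \<bar>t - t'\<bar> powr (\<gamma>/2))"
      using assms by (simp add: algebra_simps add_mono mult_left_mono)
    finally show "\<bar>g p - g q\<bar> \<le> (Kx + Kt) * (\<bar>fst p - fst q\<bar> powr \<gamma> + \<bar>snd p - snd q\<bar> powr (\<gamma>/2))"
      using pq by simp
  qed (use \<gamma> in auto)
  moreover have "bdd_above (sup_set (A \<times> B) g)" "bdd_above (holx_set \<rho>0 (A \<times> B) g \<gamma>)"
      "bdd_above (holt_set \<rho>0 (A \<times> B) g (\<gamma>/2))"
    using sup_le holx_le holt_le by (meson bdd_aboveI)+
  ultimately have "Hspace \<rho>0 \<gamma> (A \<times> B) g"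
    using \<gamma> by (simp add: Hspace_def)
  moreover have "Sup (sup_set (A \<times> B) g) \<le> S"
    using sup_le by (intro cSup_least) (use assms in \<open>auto simp: sup_set_def\<close>)
  moreover have "Sup (holx_set \<rho>0 (A \<times> B) g \<gamma>) \<le> Kx + 2 * S"
    using holx_le zero_in_holx_set[of "(x0, t0)" "A \<times> B" \<rho>0 g "\<gamma>"] assms by (intro cSup_least) auto
  moreover have "Sup (holt_set \<rho>0 (A \<times> B) g (\<gamma>/2)) \<le> Kt + 2 * S"
    using holt_le zero_in_holt_set[of "(x0, t0)" "A \<times> B" \<rho>0 g "(\<gamma>/2)"] assms by (intro cSup_least) auto
  ultimately show ?thesis
    using \<gamma> by (simp add: Hnorm_def)
qed

section \<open>The nonlocal operator\<close>

locale levy_integrand_regularity =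
  fixes \<phi> \<phi>' :: "real \<times> real \<Rightarrow> real" and I J :: "real set" and s L H T \<alpha> \<beta> :: real
  assumes neighbourhood: "\<And>x. x \<in> J \<Longrightarrow> {x - 1..x + 1} \<subseteq> I"
    and has_x_derivative: "\<And>z t. z \<in> I \<Longrightarrow> t \<in> {0..s} \<Longrightarrow>
      ((\<lambda>z. \<phi> (z, t)) has_field_derivative \<phi>' (z, t)) (at z within I)"
    and derivative_holx: "\<And>a b t. a \<in> I \<Longrightarrow> b \<in> I \<Longrightarrow> t \<in> {0..s} \<Longrightarrow>
      \<bar>\<phi>' (a, t) - \<phi>' (b, t)\<bar> \<le> H * \<bar>a - b\<bar> powr (\<beta> - 1)"
    and derivative_holt: "\<And>z t t'. z \<in> I \<Longrightarrow> t \<in> {0..s} \<Longrightarrow> t' \<in> {0..s} \<Longrightarrow>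
      \<bar>\<phi>' (z, t) - \<phi>' (z, t')\<bar> \<le> T * \<bar>t - t'\<bar> powr ((\<beta> - 1)/2)"
    and lipschitz: "\<And>x1 t1 x2 t2. t1 \<in> {0..s} \<Longrightarrow> t2 \<in> {0..s} \<Longrightarrow>
      \<bar>\<phi> (x1, t1) - \<phi> (x2, t2)\<bar> \<le> L * (\<bar>x1 - x2\<bar> + \<bar>t1 - t2\<bar> powr (1/2))"
    and nonneg: "0 \<le> H" "0 \<le> T" "0 \<le> L"
    and exponents: "1 \<le> \<alpha>" "\<alpha> < \<beta>" "\<beta> < 2"
begin

lemma shift_mem_I:
  assumes "x \<in> J" "\<bar>y\<bar> \<le> 1" "w \<in> {min 0 y..max 0 y}"
  shows "x + w \<in> I"
proof -
  have "x + w \<in> {x - 1..x + 1}"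
    using abs_le_abs_if_between_0[OF assms(3)] assms(2) by (simp add: abs_le_iff) linarith
  then show ?thesis
    using neighbourhood[OF assms(1)] by blast
qed

lemma mem_I: "x \<in> J \<Longrightarrow> x \<in> I"
  using shift_mem_I[of x 0 0] by simp

text \<open>Since \<open>J\<close> lies in the interior of \<open>I\<close>, the derivative within \<open>I\<close> is the genuine derivative,
  which is what \<open>levy_integrand\<close> uses (via \<open>deriv\<close>, which is junk where no derivative exists).\<close>

lemma deriv_eq:
  assumes "x \<in> J" "t \<in> {0..s}"
  shows "deriv (\<lambda>z. \<phi> (z, t)) x = \<phi>' (x, t)"
proof -
  have "x \<in> interior {x - 1..x + 1}"
    by simp
  then have "x \<in> interior I"
    using interior_mono[OF neighbourhood[OF assms(1)]] by blast
  then have "at x within I = at x"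
    by (rule at_within_interior)
  then have "((\<lambda>z. \<phi> (z, t)) has_field_derivative \<phi>' (x, t)) (at x)"
    using has_x_derivative[OF mem_I[OF assms(1)] assms(2)] by simp
  then show ?thesis
    by (rule DERIV_imp_deriv)
qed

lemma levy_integrand_eq:
  "x \<in> J \<Longrightarrow> t \<in> {0..s} \<Longrightarrow>
    levy_integrand \<phi> (x, t) y = \<phi> (x + y, t) - \<phi> (x, t) - y * \<phi>' (x, t) * indicator {y. \<bar>y\<bar> \<le> 1} y"
  by (simp add: levy_integrand_def deriv_eq)

lemma shifted_has_derivative:
  assumes "x \<in> J" "\<bar>y\<bar> \<le> 1" "t \<in> {0..s}" "w \<in> {min 0 y..max 0 y}"
  shows "((\<lambda>w. \<phi> (x + w, t)) has_field_derivative \<phi>' (x + w, t)) (at w within {min 0 y..max 0 y})"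
proof -
  have "((\<lambda>z. \<phi> (z, t)) has_field_derivative \<phi>' (x + w, t)) (at (x + w) within (+) x ` {min 0 y..max 0 y})"
    using shift_mem_I[OF assms(1,2)] assms
    by (intro DERIV_subset[OF has_x_derivative] image_subsetI) auto
  from DERIV_image_chain[OF this DERIV_add[OF DERIV_const DERIV_ident]] show ?thesis
    by (simp add: o_def)
qed

lemma measurable_levy_integrand:
  assumes "x \<in> J" "t \<in> {0..s}"
  shows "levy_integrand \<phi> (x, t) \<in> borel_measurable borel"
proof -
  have "dist (\<phi> (x + a, t)) (\<phi> (x + b, t)) \<le> L * dist a b" for a b
    using lipschitz[OF assms(2) assms(2), of "x + a" "x + b"] by (simp add: dist_real_def)
  then have "L-lipschitz_on UNIV (\<lambda>y. \<phi> (x + y, t))"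
    using nonneg by (intro lipschitz_onI) auto
  then have [measurable]: "(\<lambda>y. \<phi> (x + y, t)) \<in> borel_measurable borel"
    by (intro borel_measurable_continuous_onI lipschitz_on_continuous_on)
  show ?thesis
    unfolding levy_integrand_eq[OF assms, abs_def] by measurable
qed

lemma exponent_facts:
  "\<beta> = (\<alpha> + \<beta>)/2 + (\<beta> - \<alpha>)/2" "1 \<le> (\<alpha> + \<beta>)/2" "0 < (\<beta> - \<alpha>)/2" "(\<beta> - \<alpha>)/2 < 1/2"
  using exponents by (simp_all add: field_simps)

lemma levy_integrand_bound:
  assumes "x \<in> J" "t \<in> {0..s}"
  shows "\<bar>levy_integrand \<phi> (x, t) y\<bar> \<le> (H + L) * levy_weight ((\<alpha> + \<beta>)/2) y"
proof (cases "\<bar>y\<bar> \<le> 1")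
  case True
  have "\<bar>\<phi> (x + y, t) - \<phi> (x + 0, t) - y * \<phi>' (x + 0, t)\<bar>
      \<le> H * \<bar>y\<bar> powr ((\<alpha> + \<beta>)/2) * \<bar>y\<bar> powr ((\<beta> - \<alpha>)/2)"
  proof (rule taylor_remainder_interpolation_bound)
    fix w assume w: "w \<in> {min 0 y..max 0 y}"
    show "((\<lambda>w. \<phi> (x + w, t)) has_field_derivative \<phi>' (x + w, t)) (at w within {min 0 y..max 0 y})"
      by (rule shifted_has_derivative[OF assms(1) True assms(2) w])
    show near: "\<bar>\<phi>' (x + w, t) - \<phi>' (x + 0, t)\<bar> \<le> H * \<bar>w\<bar> powr (\<beta> - 1)"
      using derivative_holx[OF shift_mem_I[OF assms(1) True w] mem_I[OF assms(1)] assms(2)] by simp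
    have "\<bar>w\<bar> powr (\<beta> - 1) \<le> \<bar>y\<bar> powr (\<beta> - 1)"
      using abs_le_abs_if_between_0[OF w] exponents by (intro powr_mono2) auto
    then show "\<bar>\<phi>' (x + w, t) - \<phi>' (x + 0, t)\<bar> \<le> H * \<bar>y\<bar> powr (\<beta> - 1)"
      using near nonneg by (meson mult_left_mono order_trans)
  qed (use exponent_facts nonneg in auto)
  also have "\<dots> \<le> H * \<bar>y\<bar> powr ((\<alpha> + \<beta>)/2)"
    using True exponent_facts nonneg by (simp add: mult_left_le powr_le1)
  also have "\<dots> \<le> (H + L) * levy_weight ((\<alpha> + \<beta>)/2) y"
    using True nonneg by (simp add: levy_weight_def mult_right_mono)
  finally show ?thesis
    using True by (simp add: levy_integrand_eq[OF assms])
next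
  case False
  have "\<bar>levy_integrand \<phi> (x, t) y\<bar> = \<bar>\<phi> (x + y, t) - \<phi> (x, t)\<bar>"
    using False by (simp add: levy_integrand_eq[OF assms])
  also have "\<dots> \<le> L * \<bar>y\<bar>"
    using lipschitz[OF assms(2) assms(2), of "x + y" x] by simp
  also have "\<dots> \<le> (H + L) * levy_weight ((\<alpha> + \<beta>)/2) y"
    using False nonneg by (simp add: levy_weight_def mult_right_mono)
  finally show ?thesis .
qed

lemma levy_integrand_near_increment:
  assumes "x \<in> J" "x' \<in> J" "t \<in> {0..s}" "t' \<in> {0..s}" "\<bar>y\<bar> \<le> 1" "2 * H \<le> A" "0 \<le> h"
    and across: "\<And>w. w \<in> {min 0 y..max 0 y} \<Longrightarrow>
      \<bar>(\<phi>' (x + w, t) - \<phi>' (x' + w, t')) - (\<phi>' (x, t) - \<phi>' (x', t'))\<bar> \<le> A * h powr (\<beta> - 1)"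
  shows "\<bar>levy_integrand \<phi> (x, t) y - levy_integrand \<phi> (x', t') y\<bar>
    \<le> A * \<bar>y\<bar> powr ((\<alpha> + \<beta>)/2) * h powr ((\<beta> - \<alpha>)/2)"
proof -
  define k where "k w = \<phi> (x + w, t) - \<phi> (x' + w, t')" for w
  define k' where "k' w = \<phi>' (x + w, t) - \<phi>' (x' + w, t')" for w
  have "\<bar>k y - k 0 - y * k' 0\<bar> \<le> A * \<bar>y\<bar> powr ((\<alpha> + \<beta>)/2) * h powr ((\<beta> - \<alpha>)/2)"
  proof (rule taylor_remainder_interpolation_bound)
    fix w assume w: "w \<in> {min 0 y..max 0 y}"
    show "(k has_field_derivative k' w) (at w within {min 0 y..max 0 y})"
      unfolding k_def k'_def using assms w by (intro DERIV_diff shifted_has_derivative)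
    have I: "x + w \<in> I" "x' + w \<in> I" "x \<in> I" "x' \<in> I"
      using shift_mem_I[OF _ assms(5) w] mem_I assms by auto
    have "\<bar>k' w - k' 0\<bar> \<le> 2 * H * \<bar>w\<bar> powr (\<beta> - 1)"
      using derivative_holx[OF I(1) I(3) assms(3)] derivative_holx[OF I(2) I(4) assms(4)]
      unfolding k'_def by simp
    then show "\<bar>k' w - k' 0\<bar> \<le> A * \<bar>w\<bar> powr (\<beta> - 1)"
      using assms(6) by (smt (verit) mult_right_mono powr_ge_zero)
    show "\<bar>k' w - k' 0\<bar> \<le> A * h powr (\<beta> - 1)"
      using across[OF w] unfolding k'_def by simp
  qed (use exponent_facts nonneg assms(6,7) in auto)
  then show ?thesis
    using assms(5) by (simp add: levy_integrand_eq[OF assms(1,3)] levy_integrand_eq[OF assms(2,4)]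
        k_def k'_def algebra_simps)
qed

lemma levy_integrand_x_increment:
  assumes "x \<in> J" "x' \<in> J" "t \<in> {0..s}" "\<bar>x - x'\<bar> \<le> 1"
  shows "\<bar>levy_integrand \<phi> (x, t) y - levy_integrand \<phi> (x', t) y\<bar>
    \<le> 2 * (H + L) * \<bar>x - x'\<bar> powr ((\<beta> - \<alpha>)/2) * levy_weight ((\<alpha> + \<beta>)/2) y"
proof (cases "\<bar>y\<bar> \<le> 1")
  case True
  have "\<bar>levy_integrand \<phi> (x, t) y - levy_integrand \<phi> (x', t) y\<bar>
      \<le> 2 * (H + L) * \<bar>y\<bar> powr ((\<alpha> + \<beta>)/2) * \<bar>x - x'\<bar> powr ((\<beta> - \<alpha>)/2)"
  proof (rule levy_integrand_near_increment)
    fix w assume w: "w \<in> {min 0 y..max 0 y}"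
    have I: "x + w \<in> I" "x' + w \<in> I" "x \<in> I" "x' \<in> I"
      using shift_mem_I[OF _ True w] mem_I assms by auto
    have "\<bar>(\<phi>' (x + w, t) - \<phi>' (x' + w, t)) - (\<phi>' (x, t) - \<phi>' (x', t))\<bar> \<le> 2 * H * \<bar>x - x'\<bar> powr (\<beta> - 1)"
      using derivative_holx[OF I(1,2) assms(3)] derivative_holx[OF I(3,4) assms(3)] by simp
    then show "\<bar>(\<phi>' (x + w, t) - \<phi>' (x' + w, t)) - (\<phi>' (x, t) - \<phi>' (x', t))\<bar>
        \<le> 2 * (H + L) * \<bar>x - x'\<bar> powr (\<beta> - 1)"
      using nonneg by (smt (verit) mult_right_mono powr_ge_zero)
  qed (use assms True nonneg in auto)
  then show ?thesis
    using True by (simp add: levy_weight_def mult_ac)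
next
  case False
  have "\<bar>levy_integrand \<phi> (x, t) y - levy_integrand \<phi> (x', t) y\<bar>
      = \<bar>(\<phi> (x + y, t) - \<phi> (x' + y, t)) - (\<phi> (x, t) - \<phi> (x', t))\<bar>"
    using False by (simp add: levy_integrand_eq[OF assms(1,3)] levy_integrand_eq[OF assms(2,3)])
  also have "\<dots> \<le> 2 * L * \<bar>x - x'\<bar> powr 1"
    using lipschitz[OF assms(3) assms(3), of "x + y" "x' + y"] lipschitz[OF assms(3) assms(3), of x x']
    by simp
  also have "\<dots> \<le> 2 * (H + L) * \<bar>x - x'\<bar> powr ((\<beta> - \<alpha>)/2)"
    using assms(4) exponent_facts nonneg by (intro mult_mono powr_mono') auto
  also have "\<dots> \<le> 2 * (H + L) * \<bar>x - x'\<bar> powr ((\<beta> - \<alpha>)/2) * levy_weight ((\<alpha> + \<beta>)/2) y"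
    using mult_left_mono[of 1 "levy_weight ((\<alpha> + \<beta>)/2) y" "2 * (H + L) * \<bar>x - x'\<bar> powr ((\<beta> - \<alpha>)/2)"]
      False nonneg by (simp add: levy_weight_def)
  finally show ?thesis .
qed

lemma levy_integrand_t_increment:
  assumes "x \<in> J" "t \<in> {0..s}" "t' \<in> {0..s}" "\<bar>t - t'\<bar> \<le> 1"
  shows "\<bar>levy_integrand \<phi> (x, t) y - levy_integrand \<phi> (x, t') y\<bar>
    \<le> 2 * (H + T + L) * \<bar>t - t'\<bar> powr ((\<beta> - \<alpha>)/4) * levy_weight ((\<alpha> + \<beta>)/2) y"
proof (cases "\<bar>y\<bar> \<le> 1")
  case True
  have sqrt_powr: "(\<bar>t - t'\<bar> powr (1/2)) powr c = \<bar>t - t'\<bar> powr (c/2)" for c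
    by (subst powr_powr) simp
  have "\<bar>levy_integrand \<phi> (x, t) y - levy_integrand \<phi> (x, t') y\<bar>
      \<le> 2 * (H + T + L) * \<bar>y\<bar> powr ((\<alpha> + \<beta>)/2) * (\<bar>t - t'\<bar> powr (1/2)) powr ((\<beta> - \<alpha>)/2)"
  proof (rule levy_integrand_near_increment)
    fix w assume w: "w \<in> {min 0 y..max 0 y}"
    have I: "x + w \<in> I" "x \<in> I"
      using shift_mem_I[OF _ True w] mem_I assms by auto
    have "\<bar>(\<phi>' (x + w, t) - \<phi>' (x + w, t')) - (\<phi>' (x, t) - \<phi>' (x, t'))\<bar>
        \<le> 2 * T * (\<bar>t - t'\<bar> powr (1/2)) powr (\<beta> - 1)"
      using derivative_holt[OF I(1) assms(2,3)] derivative_holt[OF I(2) assms(2,3)]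
      unfolding sqrt_powr by simp
    then show "\<bar>(\<phi>' (x + w, t) - \<phi>' (x + w, t')) - (\<phi>' (x, t) - \<phi>' (x, t'))\<bar>
        \<le> 2 * (H + T + L) * (\<bar>t - t'\<bar> powr (1/2)) powr (\<beta> - 1)"
      using nonneg by (smt (verit) mult_right_mono powr_ge_zero)
  qed (use assms True nonneg in auto)
  then show ?thesis
    using True by (simp add: sqrt_powr levy_weight_def mult_ac)
next
  case False
  have "\<bar>levy_integrand \<phi> (x, t) y - levy_integrand \<phi> (x, t') y\<bar>
      = \<bar>(\<phi> (x + y, t) - \<phi> (x + y, t')) - (\<phi> (x, t) - \<phi> (x, t'))\<bar>"
    using False by (simp add: levy_integrand_eq[OF assms(1,2)] levy_integrand_eq[OF assms(1,3)])
  also have "\<dots> \<le> 2 * L * \<bar>t - t'\<bar> powr (1/2)"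
    using lipschitz[OF assms(2,3), of "x + y" "x + y"] lipschitz[OF assms(2,3), of x x] by simp
  also have "\<dots> \<le> 2 * (H + T + L) * \<bar>t - t'\<bar> powr ((\<beta> - \<alpha>)/4)"
    using assms(4) exponent_facts nonneg by (intro mult_mono powr_mono') auto
  also have "\<dots> \<le> 2 * (H + T + L) * \<bar>t - t'\<bar> powr ((\<beta> - \<alpha>)/4) * levy_weight ((\<alpha> + \<beta>)/2) y"
    using mult_left_mono[of 1 "levy_weight ((\<alpha> + \<beta>)/2) y" "2 * (H + T + L) * \<bar>t - t'\<bar> powr ((\<beta> - \<alpha>)/4)"]
      False nonneg by (simp add: levy_weight_def)
  finally show ?thesis .
qed

lemma Iop_Hspace:
  assumes "sets \<nu> = sets borel" "integrable \<nu> (levy_weight ((\<alpha> + \<beta>)/2))"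
    and "x0 \<in> J" "0 \<le> s" "0 \<le> \<rho>0"
  shows "(\<forall>p \<in> J \<times> {0..s}. integrable \<nu> (levy_integrand \<phi> p)) \<and>
    Hspace \<rho>0 ((\<beta> - \<alpha>)/2) (J \<times> {0..s}) (Iop \<nu> \<phi>) \<and>
    Hnorm \<rho>0 ((\<beta> - \<alpha>)/2) (J \<times> {0..s}) (Iop \<nu> \<phi>)
      \<le> 9 * (H + T + L) * (\<integral>y. levy_weight ((\<alpha> + \<beta>)/2) y \<partial>\<nu>)"
proof -
  define W where "W = levy_weight ((\<alpha> + \<beta>)/2)"
  define IW where "IW = (\<integral>y. W y \<partial>\<nu>)"
  have "integrable \<nu> W"
    using assms(2) unfolding W_def .
  have "0 \<le> IW"
    unfolding IW_def W_def by (simp add: levy_weight_nonneg)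
  have integrable: "integrable \<nu> (levy_integrand \<phi> (x, t))" if "x \<in> J" "t \<in> {0..s}" for x t
  proof (rule Bochner_Integration.integrable_bound)
    show "integrable \<nu> (\<lambda>y. (H + L) * W y)"
      using \<open>integrable \<nu> W\<close> by simp
    show "levy_integrand \<phi> (x, t) \<in> borel_measurable \<nu>"
      using measurable_levy_integrand[OF that] unfolding measurable_cong_sets[OF assms(1) refl] .
    show "AE y in \<nu>. norm (levy_integrand \<phi> (x, t) y) \<le> norm ((H + L) * W y)"
      using levy_integrand_bound[OF that] nonneg levy_weight_nonneg unfolding W_def by (simp add: abs_mult)
  qed
  have "\<bar>Iop \<nu> \<phi> (x, t)\<bar> \<le> (H + L) * IW" if "x \<in> J" "t \<in> {0..s}" for x t
    using abs_integral_diff_le[OF integrable[OF that] integrable_zero \<open>integrable \<nu> W\<close>, of "H + L"]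
      levy_integrand_bound[OF that] unfolding Iop_def IW_def W_def by simp
  moreover have "\<bar>Iop \<nu> \<phi> (x, t) - Iop \<nu> \<phi> (x', t)\<bar> \<le> (2 * (H + L) * IW) * \<bar>x - x'\<bar> powr ((\<beta> - \<alpha>)/2)"
    if "x \<in> J" "x' \<in> J" "t \<in> {0..s}" "\<bar>x - x'\<bar> \<le> 1" for x x' t
    using abs_integral_diff_le[OF integrable[OF that(1,3)] integrable[OF that(2,3)] \<open>integrable \<nu> W\<close>
        levy_integrand_x_increment[OF that, unfolded W_def[symmetric]]]
    unfolding Iop_def IW_def by (simp add: mult_ac)
  moreover have "\<bar>Iop \<nu> \<phi> (x, t) - Iop \<nu> \<phi> (x, t')\<bar> \<le> (2 * (H + T + L) * IW) * \<bar>t - t'\<bar> powr ((\<beta> - \<alpha>)/2/2)"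
    if "x \<in> J" "t \<in> {0..s}" "t' \<in> {0..s}" "\<bar>t - t'\<bar> \<le> 1" for x t t'
    using abs_integral_diff_le[OF integrable[OF that(1,2)] integrable[OF that(1,3)] \<open>integrable \<nu> W\<close>
        levy_integrand_t_increment[OF that, unfolded W_def[symmetric]]]
    unfolding Iop_def IW_def by (simp add: mult_ac)
  ultimately have "Hspace \<rho>0 ((\<beta> - \<alpha>)/2) (J \<times> {0..s}) (Iop \<nu> \<phi>) \<and>
      Hnorm \<rho>0 ((\<beta> - \<alpha>)/2) (J \<times> {0..s}) (Iop \<nu> \<phi>)
        \<le> 5 * ((H + L) * IW) + 2 * (H + L) * IW + 2 * (H + T + L) * IW"
    using exponent_facts nonneg \<open>0 \<le> IW\<close> assms(3-5)
    by (intro Hspace_of_hoelder_bounds[of _ _ x0 J 0]) auto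
  moreover have "5 * ((H + L) * IW) + 2 * (H + L) * IW + 2 * (H + T + L) * IW \<le> 9 * (H + T + L) * IW"
    using nonneg \<open>0 \<le> IW\<close> by (simp add: algebra_simps mult_right_mono)
  ultimately show ?thesis
    using integrable unfolding IW_def W_def by fastforce
qed

end

lemma levy_integrand_regularity_of_Hspace:
  assumes "Hspace \<rho>0 \<beta> (I \<times> {0..s}) \<phi>" "0 < \<rho>0" "1 \<le> \<alpha>" "\<alpha> < \<beta>" "\<beta> < 2"
    and "\<And>x. x \<in> J \<Longrightarrow> {x - 1..x + 1} \<subseteq> I" "z \<in> J" "0 \<le> s"
    and "\<And>x1 t1 x2 t2. t1 \<in> {0..s} \<Longrightarrow> t2 \<in> {0..s} \<Longrightarrow>
      \<bar>\<phi> (x1, t1) - \<phi> (x2, t2)\<bar> \<le> L * (\<bar>x1 - x2\<bar> + \<bar>t1 - t2\<bar> powr (1/2))"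
    and "0 \<le> L"
  shows "levy_integrand_regularity \<phi> (dx (I \<times> {0..s}) \<phi>) I J s L
    ((1 + 2 / \<rho>0 powr (\<beta> - 1)) * Hnorm \<rho>0 \<beta> (I \<times> {0..s}) \<phi>)
    ((1 + 2 / \<rho>0 powr ((\<beta> - 1)/2)) * Hnorm \<rho>0 \<beta> (I \<times> {0..s}) \<phi>) \<alpha> \<beta>"
proof -
  have \<beta>: "1 < \<beta>" "\<beta> < 2"
    using assms(3-5) by simp_all
  have "z \<in> I"
    using assms(6,7) by fastforce
  then have "0 \<le> Hnorm \<rho>0 \<beta> (I \<times> {0..s}) \<phi>"
    using Hnorm_1_2_bounds(1)[OF assms(1) \<beta>, of "(z, 0)"] assms(2,8) by simp
  then show ?thesis
    using assms \<beta> Hspace_has_x_derivative Hspace_dx_holx_bound Hspace_dx_holt_bound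
    by unfold_locales auto
qed

definition Iop_const :: "real measure \<Rightarrow> real \<Rightarrow> real \<Rightarrow> real \<Rightarrow> real" where
  "Iop_const \<nu> \<rho>0 \<alpha> \<beta> = 9 * (2 + 2 / \<rho>0 powr (\<beta> - 1) + 2 / \<rho>0 powr ((\<beta> - 1)/2)) *
     ((\<integral>y. levy_weight ((\<alpha> + \<beta>)/2) y \<partial>\<nu>) + 1)"

lemma Iop_const_pos:
  assumes "0 < \<rho>0"
  shows "0 < Iop_const \<nu> \<rho>0 \<alpha> \<beta>"
proof -
  have "0 \<le> (\<integral>y. levy_weight ((\<alpha> + \<beta>)/2) y \<partial>\<nu>)"
    by (rule Bochner_Integration.integral_nonneg) (simp add: levy_weight_nonneg)
  then show ?thesis
    unfolding Iop_const_def using assms by (intro mult_pos_pos) (simp_all add: add_pos_nonneg)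
qed

lemma Iop_Hspace_of_Hspace:
  assumes "sets \<nu> = sets borel" "integrable \<nu> (levy_weight ((\<alpha> + \<beta>)/2))"
    and "Hspace \<rho>0 \<beta> (I \<times> {0..s}) \<phi>" "0 < \<rho>0" "1 \<le> \<alpha>" "\<alpha> < \<beta>" "\<beta> < 2"
    and "\<And>x. x \<in> J \<Longrightarrow> {x - 1..x + 1} \<subseteq> I" "z \<in> J" "0 \<le> s"
    and "\<And>x1 t1 x2 t2. t1 \<in> {0..s} \<Longrightarrow> t2 \<in> {0..s} \<Longrightarrow>
      \<bar>\<phi> (x1, t1) - \<phi> (x2, t2)\<bar> \<le> L * (\<bar>x1 - x2\<bar> + \<bar>t1 - t2\<bar> powr (1/2))"
    and "0 \<le> L"
  shows "(\<forall>p \<in> J \<times> {0..s}. integrable \<nu> (levy_integrand \<phi> p)) \<and>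
    Hspace \<rho>0 ((\<beta> - \<alpha>)/2) (J \<times> {0..s}) (Iop \<nu> \<phi>) \<and>
    Hnorm \<rho>0 ((\<beta> - \<alpha>)/2) (J \<times> {0..s}) (Iop \<nu> \<phi>)
      \<le> Iop_const \<nu> \<rho>0 \<alpha> \<beta> * (L + Hnorm \<rho>0 \<beta> (I \<times> {0..s}) \<phi>)"
proof -
  define N where "N = Hnorm \<rho>0 \<beta> (I \<times> {0..s}) \<phi>"
  define c1 where "c1 = 1 + 2 / \<rho>0 powr (\<beta> - 1)"
  define c2 where "c2 = 1 + 2 / \<rho>0 powr ((\<beta> - 1)/2)"
  define IW where "IW = (\<integral>y. levy_weight ((\<alpha> + \<beta>)/2) y \<partial>\<nu>)"
  interpret levy_integrand_regularity \<phi> "dx (I \<times> {0..s}) \<phi>" I J s L "c1 * N" "c2 * N" \<alpha> \<beta>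
    unfolding c1_def c2_def N_def by (rule levy_integrand_regularity_of_Hspace) (use assms in auto)
  have "0 \<le> N"
    using Hnorm_1_2_bounds(1)[OF assms(3), of "(z, 0)"] assms(4-10) mem_I unfolding N_def by simp
  have "0 \<le> IW"
    unfolding IW_def by (rule Bochner_Integration.integral_nonneg) (simp add: levy_weight_nonneg)
  have "1 \<le> c1 + c2"
    using assms(4) unfolding c1_def c2_def by (simp add: add_nonneg_nonneg)
  have "9 * (c1 * N + c2 * N + L) * IW \<le> 9 * (c1 + c2) * (L + N) * (IW + 1)"
  proof -
    have "c1 * N + c2 * N + L \<le> (c1 + c2) * (L + N)"
      using \<open>0 \<le> N\<close> \<open>1 \<le> c1 + c2\<close> nonneg mult_right_mono[of 1 "c1 + c2" L] by (simp add: algebra_simps)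
    then have "9 * (c1 * N + c2 * N + L) * IW \<le> 9 * ((c1 + c2) * (L + N)) * IW"
      using \<open>0 \<le> IW\<close> by (intro mult_right_mono) auto
    also have "\<dots> \<le> 9 * ((c1 + c2) * (L + N)) * (IW + 1)"
      using \<open>0 \<le> N\<close> \<open>1 \<le> c1 + c2\<close> nonneg by (intro mult_left_mono) auto
    finally show ?thesis
      by (simp only: mult.assoc)
  qed
  then show ?thesis
    using Iop_Hspace[OF assms(1,2,9,10) less_imp_le[OF assms(4)]]
    unfolding Iop_const_def IW_def c1_def c2_def N_def by (simp add: algebra_simps)
qed

lemma Iop_Hspace_line:
  assumes "sets \<nu> = sets borel" "integrable \<nu> (levy_weight ((\<alpha> + \<beta>)/2))"
    and "Hspace \<rho>0 \<beta> (UNIV \<times> {0..s}) \<phi>" "0 < \<rho>0" "1 \<le> \<alpha>" "\<alpha> < \<beta>" "\<beta> < 2" "0 \<le> s"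
  shows "(\<forall>p \<in> UNIV \<times> {0..s}. integrable \<nu> (levy_integrand \<phi> p)) \<and>
    Hspace \<rho>0 ((\<beta> - \<alpha>)/2) (UNIV \<times> {0..s}) (Iop \<nu> \<phi>) \<and>
    Hnorm \<rho>0 ((\<beta> - \<alpha>)/2) (UNIV \<times> {0..s}) (Iop \<nu> \<phi>)
      \<le> Iop_const \<nu> \<rho>0 \<alpha> \<beta> * (3 + 2 / \<rho>0 powr (\<beta>/2)) * Hnorm \<rho>0 \<beta> (UNIV \<times> {0..s}) \<phi>"
proof -
  define N where "N = Hnorm \<rho>0 \<beta> (UNIV \<times> {0..s}) \<phi>"
  define L where "L = (2 + 2 / \<rho>0 powr (\<beta>/2)) * N"
  have "0 \<le> N"
    using Hnorm_1_2_bounds(1)[OF assms(3), of "(0, 0)"] assms(4-8) unfolding N_def by simp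
  then have "0 \<le> L"
    using assms(4) unfolding L_def by simp
  have "L + N = (3 + 2 / \<rho>0 powr (\<beta>/2)) * N"
    unfolding L_def by (simp add: algebra_simps)
  then show ?thesis
    using Iop_Hspace_of_Hspace[OF assms(1-7) _ _ assms(8), of UNIV 0 L] \<open>0 \<le> L\<close>
      Hspace_parabolic_lipschitz[OF assms(3)] assms(4-7)
    unfolding L_def N_def by (simp add: mult.assoc)
qed

theorem lemma3p2:
  fixes \<nu> :: "real measure" and \<rho> :: "real \<Rightarrow> real" and M \<alpha> \<rho>0 :: real
  assumes "\<rho> \<in> borel_measurable borel"
    and "\<forall>y. 0 \<le> \<rho> y"
    and "\<nu> = density lborel (\<lambda>y. ennreal (\<rho> y))"
    and "levy_measure \<nu>"
    and "(\<integral>\<^sup>+ y. ennreal (\<bar>y\<bar> * indicator {y. \<bar>y\<bar> > 1} y) \<partial>\<nu>) < \<infinity>"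
    and "M > 0" and "1 \<le> \<alpha>" and "\<alpha> < 2"
    and "\<forall>y. y \<noteq> 0 \<and> \<bar>y\<bar> \<le> 1 \<longrightarrow> \<rho> y \<le> M / \<bar>y\<bar> powr (1 + \<alpha>)"
    and "\<rho>0 > 0"
  shows
   "(\<forall>l r \<beta>. l < r \<and> \<alpha> < \<beta> \<and> \<beta> < 2 \<longrightarrow>
      (\<exists>C>0. \<forall>s>0. \<forall>\<phi> L.
         L > 0 \<and>
         (\<forall>x1 t1 x2 t2. t1 \<in> {0..s} \<and> t2 \<in> {0..s} \<longrightarrow>
             \<bar>\<phi> (x1, t1) - \<phi> (x2, t2)\<bar> \<le> L * (\<bar>x1 - x2\<bar> + \<bar>t1 - t2\<bar> powr (1/2))) \<and>
         Hspace \<rho>0 \<beta> ({l - 1..r + 1} \<times> {0..s}) \<phi>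
         \<longrightarrow>
         (\<forall>p \<in> {l..r} \<times> {0..s}. integrable \<nu> (levy_integrand \<phi> p)) \<and>
         Hspace \<rho>0 ((\<beta> - \<alpha>)/2) ({l..r} \<times> {0..s}) (Iop \<nu> \<phi>) \<and>
         Hnorm \<rho>0 ((\<beta> - \<alpha>)/2) ({l..r} \<times> {0..s}) (Iop \<nu> \<phi>)
           \<le> C * (L + Hnorm \<rho>0 \<beta> ({l - 1..r + 1} \<times> {0..s}) \<phi>)))
    \<and>
    (\<forall>\<beta>. \<alpha> < \<beta> \<and> \<beta> < 2 \<longrightarrow>
      (\<exists>C>0. \<forall>s>0. \<forall>\<phi>.
         Hspace \<rho>0 \<beta> (UNIV \<times> {0..s}) \<phi>
         \<longrightarrow>
         (\<forall>p \<in> UNIV \<times> {0..s}. integrable \<nu> (levy_integrand \<phi> p)) \<and>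
         Hspace \<rho>0 ((\<beta> - \<alpha>)/2) (UNIV \<times> {0..s}) (Iop \<nu> \<phi>) \<and>
         Hnorm \<rho>0 ((\<beta> - \<alpha>)/2) (UNIV \<times> {0..s}) (Iop \<nu> \<phi>)
           \<le> C * Hnorm \<rho>0 \<beta> (UNIV \<times> {0..s}) \<phi>))"
proof -
  have sets: "sets \<nu> = sets borel"
    using assms(4) by (simp add: levy_measure_def)
  have weight: "integrable \<nu> (levy_weight ((\<alpha> + \<beta>)/2))" if "\<alpha> < \<beta>" for \<beta>
    using assms that by (intro integrable_levy_weight[where \<rho> = \<rho> and M = M and \<alpha> = \<alpha>]) auto
  show ?thesis
  proof (intro conjI allI impI, goal_cases)
    case (1 l r \<beta>)
    then show ?case
      using sets weight assms(7,10)
      by (intro exI[of _ "Iop_const \<nu> \<rho>0 \<alpha> \<beta>"] conjI[OF Iop_const_pos[OF assms(10)]] allI impI, elim conjE)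
         (rule Iop_Hspace_of_Hspace[where z = l]; auto)
  next
    case (2 \<beta>)
    have C_pos: "0 < Iop_const \<nu> \<rho>0 \<alpha> \<beta> * (3 + 2 / \<rho>0 powr (\<beta>/2))"
      using Iop_const_pos[OF assms(10)] assms(10) by (simp add: add_pos_nonneg)
    from 2 show ?case
      using sets weight assms(7,10)
      by (intro exI[of _ "Iop_const \<nu> \<rho>0 \<alpha> \<beta> * (3 + 2 / \<rho>0 powr (\<beta>/2))"] conjI[OF C_pos] allI impI)
         (rule Iop_Hspace_line; auto)
  qed
qed

end
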